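(* Let $S\subset\mathbb{P}^6$ be the surface defined by $$x_1^2-x_2x_4=x_1x_5-x_3x_4=x_1x_3-x_2x_5=x_1x_6-x_3x_5=x_2x_6-x_3^2=x_4x_6-x_5^2=0,$$ $$x_1^2+x_1x_4+x_5x_7=x_1x_2+x_1^2+x_3x_7=x_1x_3+x_1x_5+x_6x_7=0,$$ let $U\subset S$ be the complement in $S$ of the three lines $x_1=x_2=x_3=x_5=x_6=0$, $x_1=x_3=x_4=x_5=x_6=0$, and $x_3=x_5=x_6=x_1+x_4=x_1+x_2=0$, and let $N_U(B)=\#\{x\in U(\mathbb{Q}):H(x)\leq B\}$. For $s_0\in\mathbb{R}$, $\mathbf{s}=(s_1,s_2,s_3)$, $\mathbf{y}=(y_1,y_2,y_3)\in\mathbb{R}^3$ define $$\Psi(s_0,\mathbf{s},\mathbf{y})=\max\{|s_0^3s_1^2s_2^2s_3^2|,\ |y_1y_2y_3|,\ |s_0s_1^2y_1^2|,\ |s_0s_2^2y_2^2|\}.$$ Then $$N_U(B)=2\,\#\left\{(s_0,\mathbf{s},\mathbf{y})\in\mathbb{Z}^7:\ \begin{array}{l}\Psi(s_0,\mathbf{s},\mathbf{y})\leq B,\ \ s_1y_1-s_2y_2+s_3y_3=0,\\ s_0,s_1,s_2,s_3,y_1>0,\\ \gcd(y_i,s_0s_js_k)=1,\ \gcd(s_i,s_j)=1\end{array}\right\}+O(B),$$ where in the coprimality conditions $\{i,j,k\}$ runs over all permutations of $\{1,2,3\}$.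
   Context: For $x\in\mathbb{P}^{6}(\mathbb{Q})$ written as $x=[\mathbf{x}]$ with $\mathbf{x}\in\mathbb{Z}^7$ primitive, $H(x)=\max_i|x_i|$. The $O$-constant is absolute; $B\geq 1$. *)

theory Defs
  imports Complex_Main
begin

text \<open>Integer vectors in Z^7 are represented as functions nat => int, supported on {1..7}
  (coordinate x_i is x i).\<close>

definition vec7 :: "(nat \<Rightarrow> int) \<Rightarrow> bool" where
  "vec7 x \<longleftrightarrow> (\<forall>i. i \<notin> {1..7} \<longrightarrow> x i = 0)"

definition primitive7 :: "(nat \<Rightarrow> int) \<Rightarrow> bool" where
  "primitive7 x \<longleftrightarrow> (\<forall>d::int. (\<forall>i\<in>{1..7}. d dvd x i) \<longrightarrow> \<bar>d\<bar> = 1)"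

definition height7 :: "(nat \<Rightarrow> int) \<Rightarrow> int" where
  "height7 x = Max ((\<lambda>i. \<bar>x i\<bar>) ` {1..7})"

definition on_S :: "(nat \<Rightarrow> int) \<Rightarrow> bool" where
  "on_S x \<longleftrightarrow>
     x 1 ^ 2 - x 2 * x 4 = 0 \<and> x 1 * x 5 - x 3 * x 4 = 0 \<and> x 1 * x 3 - x 2 * x 5 = 0 \<and>
     x 1 * x 6 - x 3 * x 5 = 0 \<and> x 2 * x 6 - x 3 ^ 2 = 0 \<and> x 4 * x 6 - x 5 ^ 2 = 0 \<and>
     x 1 ^ 2 + x 1 * x 4 + x 5 * x 7 = 0 \<and> x 1 * x 2 + x 1 ^ 2 + x 3 * x 7 = 0 \<and>
     x 1 * x 3 + x 1 * x 5 + x 6 * x 7 = 0"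

definition on_lines :: "(nat \<Rightarrow> int) \<Rightarrow> bool" where
  "on_lines x \<longleftrightarrow>
     (x 1 = 0 \<and> x 2 = 0 \<and> x 3 = 0 \<and> x 5 = 0 \<and> x 6 = 0) \<or>
     (x 1 = 0 \<and> x 3 = 0 \<and> x 4 = 0 \<and> x 5 = 0 \<and> x 6 = 0) \<or>
     (x 3 = 0 \<and> x 5 = 0 \<and> x 6 = 0 \<and> x 1 + x 4 = 0 \<and> x 1 + x 2 = 0)"

text \<open>Rational points of U of height at most B; a point of P^6(Q) is identified with the
  pair {x, -x} of its primitive integer representatives.\<close>
definition N_U :: "real \<Rightarrow> nat" where
  "N_U B = card {{x, -x} | x. vec7 x \<and> primitive7 x \<and> on_S x \<and> \<not> on_lines x
                            \<and> real_of_int (height7 x) \<le> B}"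

definition Psi :: "int \<Rightarrow> int \<Rightarrow> int \<Rightarrow> int \<Rightarrow> int \<Rightarrow> int \<Rightarrow> int \<Rightarrow> int" where
  "Psi s0 s1 s2 s3 y1 y2 y3 = Max {\<bar>s0^3 * s1^2 * s2^2 * s3^2\<bar>, \<bar>y1 * y2 * y3\<bar>,
                                   \<bar>s0 * s1^2 * y1^2\<bar>, \<bar>s0 * s2^2 * y2^2\<bar>}"

definition count_set :: "real \<Rightarrow> (int \<times> int \<times> int \<times> int \<times> int \<times> int \<times> int) set" where
  "count_set B = {(s0, s1, s2, s3, y1, y2, y3).
      real_of_int (Psi s0 s1 s2 s3 y1 y2 y3) \<le> B \<and>
      s1 * y1 - s2 * y2 + s3 * y3 = 0 \<and>
      s0 > 0 \<and> s1 > 0 \<and> s2 > 0 \<and> s3 > 0 \<and> y1 > 0 \<and>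
      gcd y1 (s0 * s2 * s3) = 1 \<and> gcd y2 (s0 * s1 * s3) = 1 \<and> gcd y3 (s0 * s1 * s2) = 1 \<and>
      gcd s1 s2 = 1 \<and> gcd s1 s3 = 1 \<and> gcd s2 s3 = 1}"

end

theory Submission
  imports Defs "HOL-Computational_Algebra.Primes"
begin

text \<open>Points of U have \<open>x\<^sub>6 \<noteq> 0\<close>, so every point of U has exactly one primitive representative
  with \<open>x\<^sub>6 > 0\<close>; changing the signs of \<open>x\<^sub>3, x\<^sub>5, x\<^sub>7\<close> is an automorphism of S preserving U and
  the height. On S with \<open>x\<^sub>6 \<noteq> 0\<close> a point is determined by \<open>(x\<^sub>3 : x\<^sub>5 : x\<^sub>6)\<close>. Writing this ratio
  in lowest terms as \<open>(a : b : c)\<close> with \<open>c > 0\<close>, and putting \<open>s\<^sub>1 = gcd a c\<close>, \<open>s\<^sub>2 = gcd b c\<close>,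
  \<open>s\<^sub>3 = gcd (a + b) c\<close>, one gets \<open>c = s\<^sub>0 s\<^sub>1 s\<^sub>2 s\<^sub>3\<close>, \<open>a = s\<^sub>1 y\<^sub>1\<close>, \<open>b = -s\<^sub>2 y\<^sub>2\<close>,
  \<open>a + b = -s\<^sub>3 y\<^sub>3\<close> with the stated coprimality conditions; this identifies the points with
  \<open>x\<^sub>3 > 0\<close> with the counted tuples, the height becoming \<open>\<Psi>\<close>. The points with \<open>x\<^sub>3 = 0\<close> lie on the
  conic \<open>(0 : 0 : 0 : u\<^sup>2 : u w : w\<^sup>2 : 0)\<close>, which has \<open>O(B)\<close> points of height at most \<open>B\<close>.\<close>

lemma of_int_Max_le_iff:
  assumes "finite (S::int set)" "S \<noteq> {}"
  shows "real_of_int (Max S) \<le> B \<longleftrightarrow> (\<forall>s\<in>S. real_of_int s \<le> B)"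
proof
  assume "real_of_int (Max S) \<le> B"
  then show "\<forall>s\<in>S. real_of_int s \<le> B"
    using Max_ge[OF assms(1)] by (meson of_int_le_iff order_trans)
next
  assume "\<forall>s\<in>S. real_of_int s \<le> B"
  then show "real_of_int (Max S) \<le> B"
    using Max_in[OF assms] by blast
qed

lemma ball_atLeastAtMost_1_7:
  "(\<forall>i\<in>{1..7::nat}. P i) \<longleftrightarrow> P 1 \<and> P 2 \<and> P 3 \<and> P 4 \<and> P 5 \<and> P 6 \<and> P 7"
proof -
  have "{1..7::nat} = {1, 2, 3, 4, 5, 6, 7}" by auto
  then show ?thesis by simp
qed

lemma vec7_ext:
  assumes "vec7 x" "vec7 x'" "\<forall>i\<in>{1..7}. x i = x' i"
  shows "x = x'"
  using assms unfolding vec7_def by (metis ext)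

lemma height7_le_iff:
  "real_of_int (height7 x) \<le> B \<longleftrightarrow> (\<forall>i\<in>{1..7}. real_of_int \<bar>x i\<bar> \<le> B)"
  unfolding height7_def by (subst of_int_Max_le_iff) simp_all

lemma Psi_le_iff:
  "real_of_int (Psi s0 s1 s2 s3 y1 y2 y3) \<le> B \<longleftrightarrow>
     real_of_int \<bar>s0^3 * s1^2 * s2^2 * s3^2\<bar> \<le> B \<and> real_of_int \<bar>y1 * y2 * y3\<bar> \<le> B \<and>
     real_of_int \<bar>s0 * s1^2 * y1^2\<bar> \<le> B \<and> real_of_int \<bar>s0 * s2^2 * y2^2\<bar> \<le> B"
  unfolding Psi_def by (subst of_int_Max_le_iff) simp_all

lemma abs_le_if_square_eq_mult:
  fixes a b c :: int
  assumes "a^2 = b * c" "real_of_int \<bar>b\<bar> \<le> B" "real_of_int \<bar>c\<bar> \<le> B"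
  shows "real_of_int \<bar>a\<bar> \<le> B"
proof -
  have "\<bar>a\<bar>^2 = \<bar>b\<bar> * \<bar>c\<bar>"
    unfolding abs_mult[symmetric] assms(1)[symmetric] by simp
  then have "real_of_int \<bar>a\<bar> ^ 2 = real_of_int \<bar>b\<bar> * real_of_int \<bar>c\<bar>"
    by (metis of_int_mult of_int_power)
  also have "\<dots> \<le> B * B"
    using assms(2,3) by (intro mult_mono) auto
  finally have "real_of_int \<bar>a\<bar> ^ 2 \<le> B ^ 2" by (simp add: power2_eq_square)
  moreover have "B \<ge> 0" using assms(2) by (smt (verit) of_int_nonneg abs_ge_zero)
  ultimately show ?thesis using power2_le_imp_le by blast
qed

lemma abs_le_floor_sqrt:
  fixes u :: int
  assumes "real_of_int (u^2) \<le> B"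
  shows "\<bar>u\<bar> \<le> \<lfloor>sqrt B\<rfloor>"
proof -
  have "real_of_int \<bar>u\<bar> ^ 2 \<le> B" using assms by simp
  then have "real_of_int \<bar>u\<bar> \<le> sqrt B" using real_le_rsqrt by blast
  then show ?thesis by (simp add: le_floor_iff)
qed

section \<open>Symmetries of U\<close>

lemma vec7_uminus [simp]: "vec7 (- x) \<longleftrightarrow> vec7 x"
  unfolding vec7_def by simp

lemma primitive7_uminus [simp]: "primitive7 (- x) \<longleftrightarrow> primitive7 x"
  unfolding primitive7_def by simp

lemma on_S_uminus [simp]: "on_S (- x) \<longleftrightarrow> on_S x"
  unfolding on_S_def power2_eq_square by simp

lemma on_lines_uminus [simp]: "on_lines (- x) \<longleftrightarrow> on_lines x"
  unfolding on_lines_def by (simp; linarith)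

lemma height7_uminus [simp]: "height7 (- x) = height7 x"
  unfolding height7_def by simp

definition flip357 :: "(nat \<Rightarrow> int) \<Rightarrow> nat \<Rightarrow> int" where
  "flip357 x = (\<lambda>i. if i = 3 \<or> i = 5 \<or> i = 7 then - x i else x i)"

lemma flip357_flip357 [simp]: "flip357 (flip357 x) = x"
  unfolding flip357_def by auto

lemma flip357_apply [simp]:
  "flip357 x 1 = x 1" "flip357 x 2 = x 2" "flip357 x 3 = - x 3" "flip357 x 4 = x 4"
  "flip357 x 5 = - x 5" "flip357 x 6 = x 6" "flip357 x 7 = - x 7"
  by (simp_all add: flip357_def)

lemma flip357_invariants [simp]:
  "vec7 (flip357 x) \<longleftrightarrow> vec7 x" "primitive7 (flip357 x) \<longleftrightarrow> primitive7 x"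
  "on_S (flip357 x) \<longleftrightarrow> on_S x" "on_lines (flip357 x) \<longleftrightarrow> on_lines x"
  "height7 (flip357 x) = height7 x"
proof -
  show "vec7 (flip357 x) \<longleftrightarrow> vec7 x" unfolding vec7_def flip357_def by auto
  have "d dvd flip357 x i \<longleftrightarrow> d dvd x i" for d i by (simp add: flip357_def)
  then show "primitive7 (flip357 x) \<longleftrightarrow> primitive7 x" unfolding primitive7_def by simp
  show "on_S (flip357 x) \<longleftrightarrow> on_S x"
    unfolding on_S_def flip357_apply power2_eq_square by (intro conj_cong; linarith)
  show "on_lines (flip357 x) \<longleftrightarrow> on_lines x" unfolding on_lines_def flip357_def by auto
  have "(\<lambda>i. \<bar>flip357 x i\<bar>) = (\<lambda>i. \<bar>x i\<bar>)" unfolding flip357_def by auto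
  then show "height7 (flip357 x) = height7 x" unfolding height7_def by metis
qed

section \<open>Geometry of S\<close>

lemma x6_nonzero_if_not_on_lines:
  assumes "on_S x" "\<not> on_lines x"
  shows "x 6 \<noteq> 0"
proof
  assume x6: "x 6 = 0"
  then have "x 3 = 0" "x 5 = 0" using assms(1) unfolding on_S_def by simp_all
  then have "x 1 * (x 1 + x 4) = 0" "x 1 * (x 1 + x 2) = 0" "x 1 * x 1 = x 2 * x 4"
    using assms(1) unfolding on_S_def by (auto simp: power2_eq_square algebra_simps)
  then show False
    using assms(2) \<open>x 3 = 0\<close> \<open>x 5 = 0\<close> x6 unfolding on_lines_def by (metis mult_eq_0_iff)
qed

text \<open>Off \<open>x\<^sub>6 = 0\<close> the equations of S express the remaining coordinates through \<open>x\<^sub>3, x\<^sub>5, x\<^sub>6\<close>: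
  \<open>x\<^sub>6 x\<^sub>1 = x\<^sub>3 x\<^sub>5\<close>, \<open>x\<^sub>6 x\<^sub>2 = x\<^sub>3\<^sup>2\<close>, \<open>x\<^sub>6 x\<^sub>4 = x\<^sub>5\<^sup>2\<close>, \<open>x\<^sub>6\<^sup>2 x\<^sub>7 = - x\<^sub>3 x\<^sub>5 (x\<^sub>3 + x\<^sub>5)\<close>.\<close>

lemma on_S_proportional_if_proportional_x356:
  assumes S: "on_S x" "on_S x'" and nz: "l * x 6 \<noteq> 0"
    and e3: "l * x 3 = m * x' 3" and e5: "l * x 5 = m * x' 5" and e6: "l * x 6 = m * x' 6"
    and i: "i \<in> {1..7}"
  shows "l * x i = m * x' i"
proof -
  have f: "x 1 * x 6 = x 3 * x 5" "x 2 * x 6 = x 3 ^ 2" "x 4 * x 6 = x 5 ^ 2"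
    "x 1 * x 3 + x 1 * x 5 + x 6 * x 7 = 0"
   and f': "x' 1 * x' 6 = x' 3 * x' 5" "x' 2 * x' 6 = x' 3 ^ 2" "x' 4 * x' 6 = x' 5 ^ 2"
    "x' 1 * x' 3 + x' 1 * x' 5 + x' 6 * x' 7 = 0"
    using S unfolding on_S_def by auto
  let ?L = "l * x 6"
  have "?L * (l * x 1) = (l * x 3) * (l * x 5)" using f(1) by algebra
  also have "\<dots> = (m * x' 3) * (m * x' 5)" by (simp only: e3 e5)
  also have "\<dots> = ?L * (m * x' 1)" unfolding e6 using f'(1) by algebra
  finally have k1: "l * x 1 = m * x' 1" using nz by simp
  have "?L * (l * x 2) = (l * x 3)^2" using f(2) by algebra
  also have "\<dots> = (m * x' 3)^2" by (simp only: e3)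
  also have "\<dots> = ?L * (m * x' 2)" unfolding e6 using f'(2) by algebra
  finally have k2: "l * x 2 = m * x' 2" using nz by simp
  have "?L * (l * x 4) = (l * x 5)^2" using f(3) by algebra
  also have "\<dots> = (m * x' 5)^2" by (simp only: e5)
  also have "\<dots> = ?L * (m * x' 4)" unfolding e6 using f'(3) by algebra
  finally have k4: "l * x 4 = m * x' 4" using nz by simp
  have "?L^2 * (l * x 7) = - ((l * x 3) * (l * x 5) * (l * x 3 + l * x 5))"
    using f(1,4) by algebra
  also have "\<dots> = - ((m * x' 3) * (m * x' 5) * (m * x' 3 + m * x' 5))" by (simp only: e3 e5)
  also have "\<dots> = ?L^2 * (m * x' 7)" unfolding e6 using f'(1,4) by algebra
  finally have k7: "l * x 7 = m * x' 7" using nz by simp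
  have "i = 1 \<or> i = 2 \<or> i = 3 \<or> i = 4 \<or> i = 5 \<or> i = 6 \<or> i = 7" using i by auto
  then show ?thesis using k1 k2 e3 k4 e5 e6 k7 by auto
qed

lemma primitive7_eq_if_proportional:
  assumes V: "vec7 x" "vec7 x'" and P: "primitive7 x" "primitive7 x'"
    and lm: "l > 0" "m > 0" and scaled: "\<forall>i\<in>{1..7}. l * x i = m * x' i"
  shows "x = x'"
proof -
  obtain l' m' where lm': "l = l' * gcd l m" "m = m' * gcd l m" "coprime l' m'"
    using gcd_coprime_exists[of l m] lm by auto
  have "gcd l m > 0" using lm by simp
  then have pos: "l' > 0" "m' > 0" using lm lm'(1,2) by (metis zero_less_mult_pos2)+
  have scaled': "l' * x i = m' * x' i" if "i \<in> {1..7}" for i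
  proof -
    have "gcd l m * (l' * x i) = gcd l m * (m' * x' i)"
      using scaled that lm'(1,2) by (metis mult.assoc mult.commute)
    then show ?thesis using lm by simp
  qed
  have "m' dvd x i" if "i \<in> {1..7}" for i
    using scaled'[OF that] lm'(3) by (metis coprime_commute coprime_dvd_mult_right_iff dvd_triv_left)
  then have "m' = 1" using P(1) pos(2) unfolding primitive7_def by fastforce
  moreover have "l' dvd x' i" if "i \<in> {1..7}" for i
    using scaled'[OF that] lm'(3) by (metis coprime_dvd_mult_right_iff dvd_triv_left)
  then have "l' = 1" using P(2) pos(1) unfolding primitive7_def by fastforce
  ultimately show ?thesis using V scaled' by (intro vec7_ext) auto
qed

section \<open>The parametrization\<close>

definition param :: "int \<Rightarrow> int \<Rightarrow> int \<Rightarrow> int \<Rightarrow> int \<Rightarrow> int \<Rightarrow> int \<Rightarrow> nat \<Rightarrow> int" where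
  "param s0 s1 s2 s3 y1 y2 y3 = (\<lambda>i.
     if i = 1 then - (s0 * s1 * s2 * y1 * y2)
     else if i = 2 then s0 * s1^2 * y1^2
     else if i = 3 then s0^2 * s1^2 * s2 * s3 * y1
     else if i = 4 then s0 * s2^2 * y2^2
     else if i = 5 then - (s0^2 * s1 * s2^2 * s3 * y2)
     else if i = 6 then s0^3 * s1^2 * s2^2 * s3^2
     else if i = 7 then - (y1 * y2 * y3) else 0)"

lemma param_apply:
  "param s0 s1 s2 s3 y1 y2 y3 1 = - (s0 * s1 * s2 * y1 * y2)"
  "param s0 s1 s2 s3 y1 y2 y3 2 = s0 * s1^2 * y1^2"
  "param s0 s1 s2 s3 y1 y2 y3 3 = s0^2 * s1^2 * s2 * s3 * y1"
  "param s0 s1 s2 s3 y1 y2 y3 4 = s0 * s2^2 * y2^2"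
  "param s0 s1 s2 s3 y1 y2 y3 5 = - (s0^2 * s1 * s2^2 * s3 * y2)"
  "param s0 s1 s2 s3 y1 y2 y3 6 = s0^3 * s1^2 * s2^2 * s3^2"
  "param s0 s1 s2 s3 y1 y2 y3 7 = - (y1 * y2 * y3)"
  by (simp_all add: param_def)

lemma vec7_param: "vec7 (param s0 s1 s2 s3 y1 y2 y3)"
  unfolding vec7_def param_def by auto

lemma on_S_param:
  assumes "s1 * y1 - s2 * y2 + s3 * y3 = 0"
  shows "on_S (param s0 s1 s2 s3 y1 y2 y3)"
proof -
  let ?r = "s1 * y1 - s2 * y2 + s3 * y3"
  let ?x = "param s0 s1 s2 s3 y1 y2 y3"
  have "(?x 1)^2 - ?x 2 * ?x 4 = 0" "?x 1 * ?x 5 - ?x 3 * ?x 4 = 0"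
    "?x 1 * ?x 3 - ?x 2 * ?x 5 = 0" "?x 1 * ?x 6 - ?x 3 * ?x 5 = 0"
    "?x 2 * ?x 6 - (?x 3)^2 = 0" "?x 4 * ?x 6 - (?x 5)^2 = 0"
    unfolding param_apply by algebra+
  moreover have "(?x 1)^2 + ?x 1 * ?x 4 + ?x 5 * ?x 7 = s0^2 * s1 * s2^2 * y1 * y2^2 * ?r"
    "?x 1 * ?x 2 + (?x 1)^2 + ?x 3 * ?x 7 = - (s0^2 * s1^2 * s2 * y1^2 * y2 * ?r)"
    "?x 1 * ?x 3 + ?x 1 * ?x 5 + ?x 6 * ?x 7 = - (s0^3 * s1^2 * s2^2 * s3 * y1 * y2 * ?r)"
    unfolding param_apply by algebra+
  ultimately show ?thesis unfolding on_S_def using assms by simp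
qed

lemma height7_param_le_iff:
  "real_of_int (height7 (param s0 s1 s2 s3 y1 y2 y3)) \<le> B \<longleftrightarrow>
   real_of_int (Psi s0 s1 s2 s3 y1 y2 y3) \<le> B"
proof -
  let ?x = "param s0 s1 s2 s3 y1 y2 y3"
  have "(?x 1)^2 = ?x 2 * ?x 4" "(?x 3)^2 = ?x 2 * ?x 6" "(?x 5)^2 = ?x 4 * ?x 6"
    unfolding param_apply by algebra+
  then have "real_of_int \<bar>?x 1\<bar> \<le> B \<and> real_of_int \<bar>?x 3\<bar> \<le> B \<and> real_of_int \<bar>?x 5\<bar> \<le> B"
    if "real_of_int \<bar>?x 2\<bar> \<le> B" "real_of_int \<bar>?x 4\<bar> \<le> B" "real_of_int \<bar>?x 6\<bar> \<le> B"
    using that abs_le_if_square_eq_mult by blast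
  moreover have "\<bar>?x 2\<bar> = \<bar>s0 * s1^2 * y1^2\<bar>" "\<bar>?x 4\<bar> = \<bar>s0 * s2^2 * y2^2\<bar>"
    "\<bar>?x 6\<bar> = \<bar>s0^3 * s1^2 * s2^2 * s3^2\<bar>" "\<bar>?x 7\<bar> = \<bar>y1 * y2 * y3\<bar>"
    unfolding param_apply by simp_all
  ultimately show ?thesis
    unfolding height7_le_iff ball_atLeastAtMost_1_7 Psi_le_iff by metis
qed

lemma not_prime_dvd_both:
  fixes p a b :: int
  assumes "gcd a b = 1" "prime p" "p dvd a" "p dvd b"
  shows False
  using assms by (metis coprime_common_divisor coprime_iff_gcd_eq_1 not_prime_unit)

lemma primitive7_param:
  assumes "s0 > 0" "s1 > 0" "s2 > 0" "s3 > 0"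
    and g1: "gcd y1 (s0 * s2 * s3) = 1" and g2: "gcd y2 (s0 * s1 * s3) = 1"
    and g3: "gcd y3 (s0 * s1 * s2) = 1"
  shows "primitive7 (param s0 s1 s2 s3 y1 y2 y3)"
  unfolding primitive7_def
proof (intro allI impI)
  fix d :: int
  let ?x = "param s0 s1 s2 s3 y1 y2 y3"
  assume "\<forall>i\<in>{1..7}. d dvd ?x i"
  then have dvd: "d dvd ?x 2" "d dvd ?x 4" "d dvd ?x 6" "d dvd ?x 7"
    unfolding ball_atLeastAtMost_1_7 by auto
  show "\<bar>d\<bar> = 1"
  proof (rule ccontr)
    assume "\<bar>d\<bar> \<noteq> 1"
    moreover have "d \<noteq> 0" using dvd(3) assms(1-4) by (auto simp: param_apply)
    ultimately obtain p where p: "prime p" "p dvd d"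
      using prime_divisor_exists[of d] by auto
    have "p dvd s0 \<or> p dvd s1 \<or> p dvd y1" "p dvd s0 \<or> p dvd s2 \<or> p dvd y2"
      "p dvd s0 \<or> p dvd s1 \<or> p dvd s2 \<or> p dvd s3" "p dvd y1 \<or> p dvd y2 \<or> p dvd y3"
      using dvd_trans[OF p(2) dvd(1)] dvd_trans[OF p(2) dvd(2)] dvd_trans[OF p(2) dvd(3)]
        dvd_trans[OF p(2) dvd(4)] p(1)
      unfolding param_apply power2_eq_square power3_eq_cube by (auto simp: prime_dvd_mult_iff)
    moreover have "p dvd y1 \<Longrightarrow> \<not> (p dvd s0 \<or> p dvd s2 \<or> p dvd s3)"
      "p dvd y2 \<Longrightarrow> \<not> (p dvd s0 \<or> p dvd s1 \<or> p dvd s3)"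
      "p dvd y3 \<Longrightarrow> \<not> (p dvd s0 \<or> p dvd s1 \<or> p dvd s2)"
      using not_prime_dvd_both[OF g1 p(1)] not_prime_dvd_both[OF g2 p(1)]
        not_prime_dvd_both[OF g3 p(1)] by (auto simp: dvd_mult)
    ultimately show False by blast
  qed
qed

definition admissible :: "int \<Rightarrow> int \<Rightarrow> int \<Rightarrow> int \<Rightarrow> int \<Rightarrow> int \<Rightarrow> int \<Rightarrow> bool" where
  "admissible s0 s1 s2 s3 y1 y2 y3 \<longleftrightarrow>
      s1 * y1 - s2 * y2 + s3 * y3 = 0 \<and>
      s0 > 0 \<and> s1 > 0 \<and> s2 > 0 \<and> s3 > 0 \<and> y1 > 0 \<and>
      gcd y1 (s0 * s2 * s3) = 1 \<and> gcd y2 (s0 * s1 * s3) = 1 \<and> gcd y3 (s0 * s1 * s2) = 1 \<and>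
      gcd s1 s2 = 1 \<and> gcd s1 s3 = 1 \<and> gcd s2 s3 = 1"

lemma count_set_eq: "count_set B = {(s0, s1, s2, s3, y1, y2, y3).
      admissible s0 s1 s2 s3 y1 y2 y3 \<and> real_of_int (Psi s0 s1 s2 s3 y1 y2 y3) \<le> B}"
  unfolding count_set_def admissible_def by auto

definition points :: "real \<Rightarrow> (nat \<Rightarrow> int) set" where
  "points B = {x. vec7 x \<and> primitive7 x \<and> on_S x \<and> \<not> on_lines x \<and> real_of_int (height7 x) \<le> B}"

definition points_x6_pos :: "real \<Rightarrow> (nat \<Rightarrow> int) set" where
  "points_x6_pos B = {x \<in> points B. x 6 > 0}"

lemma param_in_points_x6_pos:
  assumes "admissible s0 s1 s2 s3 y1 y2 y3" "real_of_int (Psi s0 s1 s2 s3 y1 y2 y3) \<le> B"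
  shows "param s0 s1 s2 s3 y1 y2 y3 \<in> points_x6_pos B" "param s0 s1 s2 s3 y1 y2 y3 3 > 0"
proof -
  note A = assms(1)[unfolded admissible_def]
  let ?x = "param s0 s1 s2 s3 y1 y2 y3"
  have "?x 6 > 0" "?x 3 > 0" unfolding param_apply using A by simp_all
  moreover have "\<not> on_lines ?x" using \<open>?x 6 > 0\<close> unfolding on_lines_def by auto
  ultimately show "?x \<in> points_x6_pos B" "?x 3 > 0"
    unfolding points_x6_pos_def points_def
    using A on_S_param primitive7_param vec7_param height7_param_le_iff assms(2) by simp_all
qed

section \<open>Inverting the parametrization\<close>

lemma coprime_gcds:
  fixes a b c :: int
  assumes "gcd a (gcd b c) = 1"
  shows "coprime (gcd a c) (gcd b c)" "coprime (gcd a c) (gcd (a + b) c)"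
    "coprime (gcd b c) (gcd (a + b) c)"
proof -
  have unit: "is_unit d" if "d dvd a" "d dvd b" "d dvd c" for d
    using that assms by (metis gcd_greatest is_unit_gcd)
  show "coprime (gcd a c) (gcd b c)"
    by (rule coprimeI) (meson dvd_trans gcd_dvd1 gcd_dvd2 unit)
  show "coprime (gcd a c) (gcd (a + b) c)"
    by (rule coprimeI) (meson dvd_trans gcd_dvd1 gcd_dvd2 unit dvd_add_right_iff)
  show "coprime (gcd b c) (gcd (a + b) c)"
    by (rule coprimeI) (meson dvd_trans gcd_dvd1 gcd_dvd2 unit dvd_add_left_iff)
qed

text \<open>Recovers \<open>(s\<^sub>0, s, y)\<close> from the point \<open>(x\<^sub>3 : x\<^sub>5 : x\<^sub>6) = (a : b : c)\<close> in lowest terms; by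
  \<open>param_apply\<close> this triple is \<open>(s\<^sub>1 y\<^sub>1 : -s\<^sub>2 y\<^sub>2 : s\<^sub>0 s\<^sub>1 s\<^sub>2 s\<^sub>3)\<close>, scaled by \<open>s\<^sub>0\<^sup>2 s\<^sub>1 s\<^sub>2 s\<^sub>3\<close>.\<close>

definition factor_triple :: "int \<Rightarrow> int \<Rightarrow> int \<Rightarrow> int \<times> int \<times> int \<times> int \<times> int \<times> int \<times> int" where
  "factor_triple a b c =
     (c div (gcd a c * gcd b c * gcd (a + b) c), gcd a c, gcd b c, gcd (a + b) c,
      a div gcd a c, - (b div gcd b c), - ((a + b) div gcd (a + b) c))"

lemma factor_triple_admissible:
  fixes a b c :: int
  assumes g: "gcd a (gcd b c) = 1" and c: "c > 0" and a: "a > 0"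
  obtains s0 s1 s2 s3 y1 y2 y3 where "factor_triple a b c = (s0, s1, s2, s3, y1, y2, y3)"
    "admissible s0 s1 s2 s3 y1 y2 y3" "c = s0 * s1 * s2 * s3" "a = s1 * y1" "b = - (s2 * y2)"
proof -
  define s1 s2 s3 where "s1 = gcd a c" and "s2 = gcd b c" and "s3 = gcd (a + b) c"
  define s0 y1 y2 y3 where "s0 = c div (s1 * s2 * s3)" and "y1 = a div s1"
    and "y2 = - (b div s2)" and "y3 = - ((a + b) div s3)"
  have pos: "s1 > 0" "s2 > 0" "s3 > 0" using c unfolding s1_def s2_def s3_def by auto
  have cop: "coprime s1 s2" "coprime s1 s3" "coprime s2 s3"
    using coprime_gcds[OF g] unfolding s1_def s2_def s3_def by auto
  have "s1 * s2 * s3 dvd c"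
    unfolding s1_def s2_def s3_def using cop[unfolded s1_def s2_def s3_def]
    by (simp add: divides_mult)
  then have "c = s0 * (s1 * s2 * s3)" unfolding s0_def by simp
  then have cs: "c = s0 * s1 * s2 * s3" by (simp add: ac_simps)
  have as: "a = s1 * y1" and bs: "b = - (s2 * y2)" and abs: "a + b = - (s3 * y3)"
    unfolding y1_def y2_def y3_def s1_def s2_def s3_def by simp_all
  have s0: "s0 > 0" using cs c pos by (smt (verit) mult_pos_pos zero_less_mult_pos2)
  have "coprime (a div s1) (c div s1)" "coprime (b div s2) (c div s2)"
    "coprime ((a + b) div s3) (c div s3)"
    unfolding s1_def s2_def s3_def using c by (auto intro: div_gcd_coprime)
  moreover have "c div s1 = s0 * s2 * s3" "c div s2 = s0 * s1 * s3" "c div s3 = s0 * s1 * s2"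
    using cs pos by (simp_all add: algebra_simps)
  ultimately have "gcd y1 (s0 * s2 * s3) = 1" "gcd y2 (s0 * s1 * s3) = 1"
    "gcd y3 (s0 * s1 * s2) = 1"
    unfolding y1_def y2_def y3_def by (simp_all add: coprime_iff_gcd_eq_1)
  moreover have "y1 > 0" using as a pos(1) by (simp add: zero_less_mult_iff)
  moreover have "s1 * y1 - s2 * y2 + s3 * y3 = 0" using as bs abs by simp
  ultimately have "admissible s0 s1 s2 s3 y1 y2 y3"
    unfolding admissible_def using s0 pos cop by (simp add: coprime_iff_gcd_eq_1)
  moreover have "factor_triple a b c = (s0, s1, s2, s3, y1, y2, y3)"
    unfolding factor_triple_def s0_def s1_def s2_def s3_def y1_def y2_def y3_def by simp
  ultimately show ?thesis using that cs as bs by blast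
qed

lemma gcd_mult_left_pos: "(k::int) > 0 \<Longrightarrow> gcd (k * m) (k * n) = k * gcd m n"
  by (metis abs_of_pos gcd_mult_distrib_int)

lemma factor_triple_of_admissible:
  assumes "admissible s0 s1 s2 s3 y1 y2 y3"
  shows "gcd (s1 * y1) (gcd (- (s2 * y2)) (s0 * s1 * s2 * s3)) = 1"
    "factor_triple (s1 * y1) (- (s2 * y2)) (s0 * s1 * s2 * s3) = (s0, s1, s2, s3, y1, y2, y3)"
proof -
  note A = assms[unfolded admissible_def]
  have ab: "s1 * y1 + - (s2 * y2) = - (s3 * y3)" using A by simp
  have "gcd (s1 * y1) (s1 * (s0 * s2 * s3)) = s1" using A by (simp add: gcd_mult_left_pos)
  then have g1: "gcd (s1 * y1) (s0 * s1 * s2 * s3) = s1" by (simp add: ac_simps)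
  have "gcd (s2 * y2) (s2 * (s0 * s1 * s3)) = s2" using A by (simp add: gcd_mult_left_pos)
  then have g2: "gcd (- (s2 * y2)) (s0 * s1 * s2 * s3) = s2" by (simp add: ac_simps)
  have "gcd (s3 * y3) (s3 * (s0 * s1 * s2)) = s3" using A by (simp add: gcd_mult_left_pos)
  then have g3: "gcd (- (s3 * y3)) (s0 * s1 * s2 * s3) = s3" by (simp add: ac_simps)
  have "coprime s1 (- (s2 * y2))"
    using A by (simp add: coprime_iff_gcd_eq_1[symmetric] coprime_commute)
  then show "gcd (s1 * y1) (gcd (- (s2 * y2)) (s0 * s1 * s2 * s3)) = 1"
    by (metis g1 gcd.assoc gcd.commute coprime_iff_gcd_eq_1)
  show "factor_triple (s1 * y1) (- (s2 * y2)) (s0 * s1 * s2 * s3) = (s0, s1, s2, s3, y1, y2, y3)"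
  proof -
    have "s0 * s1 * s2 * s3 div (s1 * s2 * s3) = s0" "s1 * y1 div s1 = y1"
      "- (s2 * y2) div s2 = - y2" "- (s3 * y3) div s3 = - y3"
      using A by (simp_all add: ac_simps flip: mult_minus_right)
    then show ?thesis unfolding factor_triple_def ab g1 g2 g3 by simp
  qed
qed

definition unparam :: "(nat \<Rightarrow> int) \<Rightarrow> int \<times> int \<times> int \<times> int \<times> int \<times> int \<times> int" where
  "unparam x = (let d = gcd (x 3) (gcd (x 5) (x 6)) in factor_triple (x 3 div d) (x 5 div d) (x 6 div d))"

lemma unparam_param:
  assumes "admissible s0 s1 s2 s3 y1 y2 y3"
  shows "unparam (param s0 s1 s2 s3 y1 y2 y3) = (s0, s1, s2, s3, y1, y2, y3)"
proof -
  let ?x = "param s0 s1 s2 s3 y1 y2 y3"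
  define k where "k = s0^2 * s1 * s2 * s3"
  have "k > 0" unfolding k_def using assms by (simp add: admissible_def)
  have x: "?x 3 = k * (s1 * y1)" "?x 5 = k * (- (s2 * y2))" "?x 6 = k * (s0 * s1 * s2 * s3)"
    unfolding param_apply k_def by algebra+
  have d: "gcd (k * (s1 * y1)) (gcd (k * (- (s2 * y2))) (k * (s0 * s1 * s2 * s3))) = k"
    by (simp only: gcd_mult_left_pos[OF \<open>k > 0\<close>] factor_triple_of_admissible(1)[OF assms]
        mult_1_right)
  have q: "k * u div k = u" for u using \<open>k > 0\<close> by simp
  show ?thesis
    unfolding unparam_def Let_def x d q by (rule factor_triple_of_admissible(2)[OF assms])
qed

lemma param_unparam:
  assumes "x \<in> points_x6_pos B" "x 3 > 0"
  obtains s0 s1 s2 s3 y1 y2 y3 where "unparam x = (s0, s1, s2, s3, y1, y2, y3)"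
    "admissible s0 s1 s2 s3 y1 y2 y3" "param s0 s1 s2 s3 y1 y2 y3 = x"
proof -
  have V: "vec7 x" "primitive7 x" "on_S x" "x 6 > 0"
    using assms unfolding points_x6_pos_def points_def by auto
  define d where "d = gcd (x 3) (gcd (x 5) (x 6))"
  have "d > 0" unfolding d_def using V(4) by (simp add: order_le_neq_trans)
  define a b c where "a = x 3 div d" and "b = x 5 div d" and "c = x 6 div d"
  have "d dvd x 3" "d dvd x 5" "d dvd x 6" unfolding d_def by (meson dvd_trans gcd_dvd1 gcd_dvd2)+
  then have x: "x 3 = d * a" "x 5 = d * b" "x 6 = d * c" unfolding a_def b_def c_def by simp_all
  have "d = d * gcd a (gcd b c)"
    using \<open>d > 0\<close> by (subst (1) d_def) (simp add: x gcd_mult_left_pos)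
  then have g: "gcd a (gcd b c) = 1" using \<open>d > 0\<close> by simp
  have "c > 0" "a > 0" using x V(4) assms(2) \<open>d > 0\<close> by (simp_all add: zero_less_mult_iff)
  then obtain s0 s1 s2 s3 y1 y2 y3 where F: "factor_triple a b c = (s0, s1, s2, s3, y1, y2, y3)"
    "admissible s0 s1 s2 s3 y1 y2 y3" "c = s0 * s1 * s2 * s3" "a = s1 * y1" "b = - (s2 * y2)"
    using factor_triple_admissible[OF g] by blast
  let ?x = "param s0 s1 s2 s3 y1 y2 y3"
  define k where "k = s0^2 * s1 * s2 * s3"
  have "k > 0" unfolding k_def using F(2) by (simp add: admissible_def)
  have x': "?x 3 = k * a" "?x 5 = k * b" "?x 6 = k * c"
    unfolding param_apply k_def F(3-5) by algebra+
  have S': "on_S ?x" and P': "primitive7 ?x"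
    using F(2) on_S_param primitive7_param by (simp_all add: admissible_def)
  have "k * x 3 = d * ?x 3" "k * x 5 = d * ?x 5" "k * x 6 = d * ?x 6"
    unfolding x x' by (simp_all add: ac_simps)
  moreover have "k * x 6 \<noteq> 0" using \<open>k > 0\<close> V(4) by simp
  ultimately have "\<forall>i\<in>{1..7}. k * x i = d * ?x i"
    using on_S_proportional_if_proportional_x356[OF V(3) S'] by blast
  then have "param s0 s1 s2 s3 y1 y2 y3 = x"
    using primitive7_eq_if_proportional[OF V(1) vec7_param V(2) P' \<open>k > 0\<close> \<open>d > 0\<close>] by simp
  moreover have "unparam x = (s0, s1, s2, s3, y1, y2, y3)"
    unfolding unparam_def Let_def d_def[symmetric] a_def[symmetric] b_def[symmetric]
      c_def[symmetric] F(1) ..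
  ultimately show ?thesis using that F(2) by blast
qed

lemma bij_betw_param:
  "bij_betw (\<lambda>(s0, s1, s2, s3, y1, y2, y3). param s0 s1 s2 s3 y1 y2 y3)
     (count_set B) {x \<in> points_x6_pos B. x 3 > 0}"
proof (rule bij_betw_byWitness[where f' = unparam])
  show "\<forall>t\<in>count_set B. unparam (case t of (s0, s1, s2, s3, y1, y2, y3) \<Rightarrow>
      param s0 s1 s2 s3 y1 y2 y3) = t"
    unfolding count_set_eq by (auto simp: unparam_param)
  show "(\<lambda>(s0, s1, s2, s3, y1, y2, y3). param s0 s1 s2 s3 y1 y2 y3) ` count_set B
      \<subseteq> {x \<in> points_x6_pos B. x 3 > 0}"
    unfolding count_set_eq by (auto simp: param_in_points_x6_pos)
  show "\<forall>x\<in>{x \<in> points_x6_pos B. x 3 > 0}.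
      (case unparam x of (s0, s1, s2, s3, y1, y2, y3) \<Rightarrow> param s0 s1 s2 s3 y1 y2 y3) = x"
  proof
    fix x assume "x \<in> {x \<in> points_x6_pos B. x 3 > 0}"
    then obtain s0 s1 s2 s3 y1 y2 y3 where "unparam x = (s0, s1, s2, s3, y1, y2, y3)"
      "param s0 s1 s2 s3 y1 y2 y3 = x"
      using param_unparam by (metis (no_types, lifting) mem_Collect_eq)
    then show "(case unparam x of (s0, s1, s2, s3, y1, y2, y3) \<Rightarrow> param s0 s1 s2 s3 y1 y2 y3) = x"
      by simp
  qed
  show "unparam ` {x \<in> points_x6_pos B. x 3 > 0} \<subseteq> count_set B"
  proof
    fix t assume "t \<in> unparam ` {x \<in> points_x6_pos B. x 3 > 0}"
    then obtain x where x: "x \<in> points_x6_pos B" "x 3 > 0" "t = unparam x" by blast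
    then obtain s0 s1 s2 s3 y1 y2 y3 where "t = (s0, s1, s2, s3, y1, y2, y3)"
      "admissible s0 s1 s2 s3 y1 y2 y3" "param s0 s1 s2 s3 y1 y2 y3 = x"
      using param_unparam by metis
    moreover have "real_of_int (height7 x) \<le> B"
      using x(1) unfolding points_x6_pos_def points_def by simp
    ultimately show "t \<in> count_set B"
      unfolding count_set_eq using height7_param_le_iff by auto
  qed
qed

section \<open>Counting\<close>

lemma N_U_eq_card_points_x6_pos: "N_U B = card (points_x6_pos B)"
proof -
  have "{{x, -x} | x. vec7 x \<and> primitive7 x \<and> on_S x \<and> \<not> on_lines x
            \<and> real_of_int (height7 x) \<le> B} = (\<lambda>x. {x, -x}) ` points_x6_pos B"
  proof (intro equalityI subsetI)
    fix X assume "X \<in> {{x, -x} | x. vec7 x \<and> primitive7 x \<and> on_S x \<and> \<not> on_lines x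
            \<and> real_of_int (height7 x) \<le> B}"
    then obtain x where X: "X = {x, -x}" and x: "x \<in> points B" unfolding points_def by blast
    then have "-x \<in> points B" "X = {-x, - (-x)}" unfolding points_def by auto
    moreover have "x 6 \<noteq> 0" using x x6_nonzero_if_not_on_lines unfolding points_def by blast
    ultimately show "X \<in> (\<lambda>x. {x, -x}) ` points_x6_pos B"
      using X x unfolding points_x6_pos_def
      by (cases "x 6 > 0") (auto intro!: image_eqI)
  qed (auto simp: points_x6_pos_def points_def)
  moreover have "inj_on (\<lambda>x. {x, -x}) (points_x6_pos B)"
    by (rule inj_onI) (auto simp: points_x6_pos_def doubleton_eq_iff)
  ultimately show ?thesis unfolding N_U_def by (simp add: card_image)
qed

lemma finite_points: "finite (points B)"
proof (rule finite_subset)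
  let ?K = "\<lfloor>B\<rfloor>"
  show "points B \<subseteq> {x. \<forall>i. (i \<in> {1..7} \<longrightarrow> x i \<in> {-?K..?K}) \<and> (i \<notin> {1..7} \<longrightarrow> x i = 0)}"
  proof
    fix x assume x: "x \<in> points B"
    then have bound: "\<bar>x i\<bar> \<le> ?K" if "i \<in> {1..7}" for i
      using that unfolding points_def height7_le_iff by (simp add: le_floor_iff)
    have "x i \<in> {-?K..?K}" if "i \<in> {1..7}" for i
      using bound[OF that] unfolding atLeastAtMost_iff abs_le_iff by linarith
    then show "x \<in> {x. \<forall>i. (i \<in> {1..7} \<longrightarrow> x i \<in> {-?K..?K}) \<and> (i \<notin> {1..7} \<longrightarrow> x i = 0)}"
      using x unfolding points_def vec7_def by blast
  qed
qed (intro finite_set_of_finite_funs; simp)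

lemma card_points_x6_pos:
  "card (points_x6_pos B) =
     2 * card {x \<in> points_x6_pos B. x 3 > 0} + card {x \<in> points_x6_pos B. x 3 = 0}"
proof -
  let ?P = "{x \<in> points_x6_pos B. x 3 > 0}" and ?N = "{x \<in> points_x6_pos B. x 3 < 0}"
    and ?Z = "{x \<in> points_x6_pos B. x 3 = 0}"
  have "finite (points_x6_pos B)" using finite_points unfolding points_x6_pos_def by simp
  then have fin: "finite ?P" "finite ?N" "finite ?Z" by simp_all
  have img: "flip357 ` ?P = ?N"
  proof (intro equalityI subsetI)
    fix y assume "y \<in> flip357 ` ?P"
    then show "y \<in> ?N" unfolding points_x6_pos_def points_def by auto
  next
    fix y assume "y \<in> ?N"
    then have "flip357 y \<in> ?P" unfolding points_x6_pos_def points_def by simp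
    then show "y \<in> flip357 ` ?P" by (rule image_eqI[rotated]) simp
  qed
  have "inj_on flip357 ?P" by (rule inj_on_inverseI[where g = flip357]) simp
  then have "card ?N = card ?P" unfolding img[symmetric] by (rule card_image)
  have "card (points_x6_pos B) = card (?P \<union> ?N \<union> ?Z)" by (rule arg_cong[where f = card]) auto
  also have "\<dots> = card (?P \<union> ?N) + card ?Z" by (rule card_Un_disjoint) (use fin in auto)
  also have "card (?P \<union> ?N) = card ?P + card ?N" by (rule card_Un_disjoint) (use fin in auto)
  finally show ?thesis using \<open>card ?N = card ?P\<close> by simp
qed

lemma gcd_power2_eq_if_coprime_mult_eq_power2:
  fixes a b c :: int
  assumes "a * c = b^2" "coprime a c" "a \<ge> 0"
  shows "(gcd a b)^2 = a"
proof -
  have "(gcd a b)^2 = gcd (a^2) (b^2)" by (simp add: gcd_exp)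
  also have "\<dots> = gcd (a * a) (a * c)" unfolding assms(1)[symmetric] by (simp add: power2_eq_square)
  also have "\<dots> = \<bar>a\<bar> * gcd a c" by (simp add: gcd_mult_distrib_int)
  finally show ?thesis using assms(2,3) by simp
qed

definition conic_point :: "int \<Rightarrow> int \<Rightarrow> nat \<Rightarrow> int" where
  "conic_point u w = (\<lambda>i. if i = 4 then u^2 else if i = 5 then u * w else if i = 6 then w^2 else 0)"

lemma on_conic_if_x3_eq_0:
  assumes V: "vec7 x" "on_S x" "primitive7 x" "x 6 > 0" and x3: "x 3 = 0"
  obtains u w where "x = conic_point u w"
proof -
  have x2: "x 2 = 0" and x1: "x 1 = 0" and x7: "x 7 = 0" and m: "x 4 * x 6 = x 5 ^ 2"
    using V(2,4) x3 unfolding on_S_def by (auto simp: power2_eq_square)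
  have "x 4 \<ge> 0"
    using V(4) m by (metis zero_le_power2 zero_le_mult_iff not_less)
  define d where "d = gcd (x 4) (x 6)"
  have "d * d dvd x 4 * x 6" unfolding d_def by (intro mult_dvd_mono) auto
  then have "d ^ 2 dvd x 5 ^ 2" unfolding m by (simp add: power2_eq_square)
  then have "d dvd x 5" using pow_divides_pow_iff[of 2 d "x 5"] by simp
  then have "\<forall>i\<in>{1..7}. d dvd x i" unfolding ball_atLeastAtMost_1_7 using x1 x2 x3 x7 d_def by simp
  then have cop: "gcd (x 4) (x 6) = 1" using V(3) unfolding primitive7_def d_def by fastforce
  define u v where "u = gcd (x 4) (x 5)" and "v = gcd (x 6) (x 5)"
  have u: "u^2 = x 4"
    unfolding u_def using m cop \<open>x 4 \<ge> 0\<close>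
    by (intro gcd_power2_eq_if_coprime_mult_eq_power2) (simp_all add: coprime_iff_gcd_eq_1)
  have v: "v^2 = x 6"
    unfolding v_def using m cop V(4)
    by (intro gcd_power2_eq_if_coprime_mult_eq_power2) (simp_all add: coprime_iff_gcd_eq_1 ac_simps)
  have "x 5 ^ 2 = (u * v)^2" unfolding power_mult_distrib u v m ..
  then obtain w where w: "x 5 = u * w" "w^2 = x 6"
    using v unfolding power2_eq_iff by (metis minus_mult_right power2_minus)
  have "vec7 (conic_point u w)" unfolding vec7_def conic_point_def by auto
  moreover have "\<forall>i\<in>{1..7}. x i = conic_point u w i"
    unfolding ball_atLeastAtMost_1_7 conic_point_def using x1 x2 x3 x7 u w by simp
  ultimately have "x = conic_point u w" using V(1) vec7_ext by blast
  then show ?thesis using that by blast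
qed

lemma card_box_floor_sqrt_le:
  assumes "B \<ge> 1"
  shows "real (card ({-\<lfloor>sqrt B\<rfloor>..\<lfloor>sqrt B\<rfloor>} \<times> {-\<lfloor>sqrt B\<rfloor>..\<lfloor>sqrt B\<rfloor>})) \<le> 9 * B"
proof -
  define r where "r = \<lfloor>sqrt B\<rfloor>"
  have "1 \<le> r" unfolding r_def using assms by (simp add: le_floor_iff)
  have "real (card ({-r..r} \<times> {-r..r})) = (2 * real_of_int r + 1) ^ 2"
    using \<open>1 \<le> r\<close> by (simp add: card_cartesian_product power2_eq_square)
  also have "\<dots> \<le> (3 * real_of_int r) ^ 2"
    using \<open>1 \<le> r\<close> by (intro power_mono) auto
  also have "\<dots> = 9 * real_of_int r ^ 2" by (simp add: power_mult_distrib)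
  also have "\<dots> \<le> 9 * B"
  proof -
    have "real_of_int r \<le> sqrt B" "0 \<le> real_of_int r" unfolding r_def using \<open>1 \<le> r\<close> r_def by simp_all
    then have "real_of_int r ^ 2 \<le> sqrt B ^ 2" by (intro power_mono)
    then show ?thesis using assms by simp
  qed
  finally show ?thesis unfolding r_def .
qed

lemma card_x3_eq_0_le:
  assumes "B \<ge> 1"
  shows "real (card {x \<in> points_x6_pos B. x 3 = 0}) \<le> 9 * B"
proof -
  define r where "r = \<lfloor>sqrt B\<rfloor>"
  have "{x \<in> points_x6_pos B. x 3 = 0} \<subseteq> (\<lambda>(u, w). conic_point u w) ` ({-r..r} \<times> {-r..r})"
  proof
    fix x assume x: "x \<in> {x \<in> points_x6_pos B. x 3 = 0}"
    then obtain u w where uw: "x = conic_point u w"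
      using on_conic_if_x3_eq_0 unfolding points_x6_pos_def points_def by blast
    have "real_of_int \<bar>x 4\<bar> \<le> B" "real_of_int \<bar>x 6\<bar> \<le> B"
      using x unfolding points_x6_pos_def points_def height7_le_iff ball_atLeastAtMost_1_7 by auto
    then have "\<bar>u\<bar> \<le> r" "\<bar>w\<bar> \<le> r"
      unfolding r_def using abs_le_floor_sqrt by (auto simp: uw conic_point_def)
    then show "x \<in> (\<lambda>(u, w). conic_point u w) ` ({-r..r} \<times> {-r..r})"
      using uw by (auto simp: abs_le_iff)
  qed
  then have "card {x \<in> points_x6_pos B. x 3 = 0} \<le> card ({-r..r} \<times> {-r..r})"
    by (meson card_image_le card_mono finite_SigmaI finite_atLeastAtMost_int finite_imageI le_trans)
  then show ?thesis
    using card_box_floor_sqrt_le[OF assms] unfolding r_def by linarith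
qed

theorem lemma3p3:
  shows "\<exists>C::real. \<forall>B::real. B \<ge> 1 \<longrightarrow>
           \<bar>real (N_U B) - 2 * real (card (count_set B))\<bar> \<le> C * B"
proof (intro exI allI impI)
  fix B :: real assume "B \<ge> 1"
  have "card (count_set B) = card {x \<in> points_x6_pos B. x 3 > 0}"
    using bij_betw_same_card[OF bij_betw_param] .
  then have "real (N_U B) - 2 * real (card (count_set B)) =
      real (card {x \<in> points_x6_pos B. x 3 = 0})"
    unfolding N_U_eq_card_points_x6_pos card_points_x6_pos by simp
  then show "\<bar>real (N_U B) - 2 * real (card (count_set B))\<bar> \<le> 9 * B"
    using card_x3_eq_0_le[OF \<open>B \<ge> 1\<close>] by simp
qed

end
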